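(* Let $m,n\in\mathbb{N}$ and $(X,y,v)\in\mathbb{C}^{(mn\times mn)\cdot d}\times\mathbb{C}^{mn}\times\mathbb{C}^{mn}$. If $\|X\|_{\mathrm{col}}<\frac{1}{\sqrt n}$, then the linear functional $\ell_{X,y,v}$ defined on the orthonormal basis of $\mathscr{F}_n(\mathbb{C}^d)$ by $E_{\alpha,\beta}\star e_\omega\mapsto y^*\,E_{\alpha,\beta}\star e_\omega(X)\,v$ extends to a bounded linear functional on $\mathscr{F}_n(\mathbb{C}^d)$.
   Context: Equip $\mathbb{C}^{n\times n}$ with the Hilbert–Schmidt inner product and let $\mathscr{F}_n(\mathbb{C}^d)=\bigoplus_{\ell\ge0}\mathbb{C}^{n\times n}\otimes(\mathbb{C}^d\otimes\mathbb{C}^{n\times n})^{\otimes\ell}$ (Hilbert space tensor products). With $E_{i,j}$ the matrix units of $\mathbb{C}^{n\times n}$ and $e_1,\dots,e_d$ the standard basis of $\mathbb{C}^d$, for words $\alpha=a_0\cdots a_\ell,\beta=b_0\cdots b_\ell$ in letters $\{1,\dots,n\}$ and $\omega=w_1\cdots w_\ell$ in letters $\{1,\dots,d\}$ put $E_{\alpha,\beta}\star e_\omega=E_{a_0,b_0}\otimes e_{w_1}\otimes E_{a_1,b_1}\otimes\cdots\otimes e_{w_\ell}\otimes E_{a_\ell,b_\ell}$; these vectors ($\ell\ge0$) form an orthonormal basis of $\mathscr{F}_n(\mathbb{C}^d)$. For $X\in\mathbb{C}^{(mn\times mn)\cdot d}$ (column $d$-tuple of $mn\times mn$ matrices, $\|X\|_{\mathrm{col}}$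 the operator norm of the stacked $mnd\times mn$ matrix), the formal evaluation is $E_{\alpha,\beta}\star e_\omega(X)=(I_m\otimes E_{a_0,b_0})X_{w_1}(I_m\otimes E_{a_1,b_1})X_{w_2}\cdots X_{w_\ell}(I_m\otimes E_{a_\ell,b_\ell})\in\mathbb{C}^{mn\times mn}$. *)

theory Defs
  imports "HOL-Analysis.Analysis" "Jordan_Normal_Form.Matrix"
begin

text \<open>Matrix units E_{a,b} of C^{n x n} are 0-indexed: a, b < n.
  The block matrix I_m \<otimes> E_{a,b} in C^{mn x mn}, with the Kronecker convention
  that row index p*n + r corresponds to (p, r).\<close>
definition kron_unit :: "nat \<Rightarrow> nat \<Rightarrow> nat \<Rightarrow> nat \<Rightarrow> complex mat" where
  "kron_unit m n a b = mat (m*n) (m*n)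
     (\<lambda>(i,j). if i div n = j div n \<and> i mod n = a \<and> j mod n = b then 1 else 0)"

text \<open>Index set of the orthonormal basis E_{alpha,beta} * e_omega of F_n(C^d):
  triples (alpha, beta, omega) with |alpha| = |beta| = |omega| + 1, letters of alpha, beta
  in {0..<n}, letters of omega in {0..<d}.\<close>
definition fock_index :: "nat \<Rightarrow> nat \<Rightarrow> (nat list \<times> nat list \<times> nat list) set" where
  "fock_index n d = {(\<alpha>, \<beta>, \<omega>). length \<alpha> = Suc (length \<omega>) \<and> length \<beta> = Suc (length \<omega>)
      \<and> set \<alpha> \<subseteq> {..<n} \<and> set \<beta> \<subseteq> {..<n} \<and> set \<omega> \<subseteq> {..<d}}"

text \<open>Formal evaluation of E_{alpha,beta} * e_omega at the d-tuple X (a list of d matrices,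
  0-indexed).\<close>
fun word_eval :: "nat \<Rightarrow> nat \<Rightarrow> complex mat list \<Rightarrow> nat list \<Rightarrow> nat list \<Rightarrow> nat list \<Rightarrow> complex mat" where
  "word_eval m n X [a] [b] [] = kron_unit m n a b"
| "word_eval m n X (a # \<alpha>) (b # \<beta>) (w # \<omega>) =
     kron_unit m n a b * (X ! w) * word_eval m n X \<alpha> \<beta> \<omega>"
| "word_eval m n X _ _ _ = 0\<^sub>m (m*n) (m*n)"

definition vnorm2 :: "complex vec \<Rightarrow> real" where
  "vnorm2 u = (\<Sum>i<dim_vec u. (cmod (u $ i))\<^sup>2)"

text \<open>Column norm: operator norm of the stacked (mnd x mn) matrix.\<close>
definition col_norm :: "nat \<Rightarrow> nat \<Rightarrow> complex mat list \<Rightarrow> real" where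
  "col_norm m n X = Sup {sqrt (\<Sum>k<length X. vnorm2 ((X ! k) *\<^sub>v u)) | u.
      u \<in> carrier_vec (m*n) \<and> vnorm2 u \<le> 1}"

definition sesq :: "complex vec \<Rightarrow> complex mat \<Rightarrow> complex vec \<Rightarrow> complex" where
  "sesq y M v = (\<Sum>i<dim_vec y. cnj (y $ i) * ((M *\<^sub>v v) $ i))"

text \<open>The Hilbert space F_n(C^d), realised in coordinates w.r.t. its orthonormal basis
  as l^2 of the basis index set.\<close>
definition ell2_on :: "'i set \<Rightarrow> ('i \<Rightarrow> complex) set" where
  "ell2_on I = {f. (\<forall>x. x \<notin> I \<longrightarrow> f x = 0) \<and> (\<lambda>x. (cmod (f x))\<^sup>2) summable_on I}"

definition ell2_norm :: "'i set \<Rightarrow> ('i \<Rightarrow> complex) \<Rightarrow> real" where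
  "ell2_norm I f = sqrt (infsum (\<lambda>x. (cmod (f x))\<^sup>2) I)"

definition basis_vec :: "'i \<Rightarrow> 'i \<Rightarrow> complex" where
  "basis_vec b = (\<lambda>x. if x = b then 1 else 0)"

definition bounded_linear_functional_on :: "'i set \<Rightarrow> (('i \<Rightarrow> complex) \<Rightarrow> complex) \<Rightarrow> bool" where
  "bounded_linear_functional_on I L \<longleftrightarrow>
     (\<forall>f\<in>ell2_on I. \<forall>g\<in>ell2_on I. L (\<lambda>x. f x + g x) = L f + L g) \<and>
     (\<forall>c. \<forall>f\<in>ell2_on I. L (\<lambda>x. c * f x) = c * L f) \<and>
     (\<exists>K. \<forall>f\<in>ell2_on I. cmod (L f) \<le> K * ell2_norm I f)"

end

theory Submission
  imports Defs
begin

(* The coefficients c(alpha, beta, omega) = y^* (E_{alpha,beta} * e_omega)(X) v are square summable,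
   so pairing with c is a bounded functional on the l^2 space of the basis (Cauchy-Schwarz).
   Square summability is checked one level |omega| = l at a time. Appending a letter on the right
   multiplies the evaluation by X_w (I_m (x) E_{a,b}); since
     sum_{a,b} |(I_m (x) E_{a,b}) u|^2 = n |u|^2   and   sum_w |X_w u|^2 <= |X|_col^2 |u|^2,
   level l contributes at most n |y|^2 |v|^2 (n |X|_col^2)^l, a geometric series because
   n |X|_col^2 < 1. *)

unbundle no vec_syntax

lemma cmod_sum_mult_squared_le:
  fixes a b :: "'i \<Rightarrow> complex"
  shows "(cmod (\<Sum>i\<in>I. a i * b i))\<^sup>2 \<le> (\<Sum>i\<in>I. (cmod (a i))\<^sup>2) * (\<Sum>i\<in>I. (cmod (b i))\<^sup>2)"
proof -
  have "cmod (\<Sum>i\<in>I. a i * b i) \<le> (\<Sum>i\<in>I. cmod (a i) * cmod (b i))"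
    by (rule order_trans[OF norm_sum]) (simp add: norm_mult)
  then have "(cmod (\<Sum>i\<in>I. a i * b i))\<^sup>2 \<le> (\<Sum>i\<in>I. cmod (a i) * cmod (b i))\<^sup>2"
    by (rule power_mono) simp
  also have "\<dots> \<le> (\<Sum>i\<in>I. (cmod (a i))\<^sup>2) * (\<Sum>i\<in>I. (cmod (b i))\<^sup>2)"
    by (rule Cauchy_Schwarz_ineq_sum)
  finally show ?thesis .
qed

lemma summable_on_norm_mult_ell2:
  fixes f c :: "'i \<Rightarrow> complex"
  assumes f: "(\<lambda>x. (cmod (f x))\<^sup>2) summable_on I" and c: "(\<lambda>x. (cmod (c x))\<^sup>2) summable_on I"
  shows "(\<lambda>x. norm (f x * c x)) summable_on I"
proof (rule summable_on_comparison_test)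
  show "(\<lambda>x. ((cmod (f x))\<^sup>2 + (cmod (c x))\<^sup>2) * (1/2)) summable_on I"
    by (intro summable_on_cmult_left summable_on_add f c)
  show "norm (f x * c x) \<le> ((cmod (f x))\<^sup>2 + (cmod (c x))\<^sup>2) * (1/2)" for x
    using sum_squares_bound[of "cmod (f x)" "cmod (c x)"] by (simp add: norm_mult)
qed simp

lemma infsum_norm_mult_le_ell2_norm:
  fixes f c :: "'i \<Rightarrow> complex"
  assumes f: "(\<lambda>x. (cmod (f x))\<^sup>2) summable_on I" and c: "(\<lambda>x. (cmod (c x))\<^sup>2) summable_on I"
  shows "(\<Sum>\<^sub>\<infinity>x\<in>I. norm (f x * c x)) \<le> ell2_norm I f * ell2_norm I c"
proof (rule infsum_le_finite_sums[OF summable_on_norm_mult_ell2[OF f c]])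
  fix F assume F: "finite F" "F \<subseteq> I"
  have partial: "(\<Sum>x\<in>F. (cmod (g x))\<^sup>2) \<le> (\<Sum>\<^sub>\<infinity>x\<in>I. (cmod (g x))\<^sup>2)"
    if "(\<lambda>x. (cmod (g x))\<^sup>2) summable_on I" for g :: "'i \<Rightarrow> complex"
    using finite_sum_le_infsum[OF that F(1,2)] by simp
  have "(\<Sum>x\<in>F. norm (f x * c x))\<^sup>2 \<le> (\<Sum>x\<in>F. (cmod (f x))\<^sup>2) * (\<Sum>x\<in>F. (cmod (c x))\<^sup>2)"
    using Cauchy_Schwarz_ineq_sum[of "\<lambda>x. cmod (f x)" "\<lambda>x. cmod (c x)" F] by (simp add: norm_mult)
  also have "\<dots> \<le> (ell2_norm I f * ell2_norm I c)\<^sup>2"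
    unfolding ell2_norm_def power_mult_distrib
    by (simp add: infsum_nonneg mult_mono partial f c sum_nonneg)
  finally show "(\<Sum>x\<in>F. norm (f x * c x)) \<le> ell2_norm I f * ell2_norm I c"
    by (rule power2_le_imp_le) (simp add: ell2_norm_def infsum_nonneg)
qed

lemma bounded_linear_functional_on_ell2_pairing:
  fixes c :: "'i \<Rightarrow> complex"
  assumes c: "(\<lambda>x. (cmod (c x))\<^sup>2) summable_on I"
  shows "bounded_linear_functional_on I (\<lambda>f. \<Sum>\<^sub>\<infinity>x\<in>I. f x * c x)"
proof -
  have summable: "(\<lambda>x. f x * c x) summable_on I" if "f \<in> ell2_on I" for f
    using summable_on_norm_mult_ell2[OF _ c] that unfolding ell2_on_def
    by (blast intro: abs_summable_summable)
  have "cmod (\<Sum>\<^sub>\<infinity>x\<in>I. f x * c x) \<le> ell2_norm I c * ell2_norm I f" if "f \<in> ell2_on I" for f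
  proof -
    have f: "(\<lambda>x. (cmod (f x))\<^sup>2) summable_on I" using that unfolding ell2_on_def by blast
    have "cmod (\<Sum>\<^sub>\<infinity>x\<in>I. f x * c x) \<le> (\<Sum>\<^sub>\<infinity>x\<in>I. norm (f x * c x))"
      by (rule norm_infsum_bound) (use summable_on_norm_mult_ell2[OF f c] in simp)
    also have "\<dots> \<le> ell2_norm I f * ell2_norm I c"
      by (rule infsum_norm_mult_le_ell2_norm[OF f c])
    finally show ?thesis by (simp only: mult.commute)
  qed
  then show ?thesis
    unfolding bounded_linear_functional_on_def
    by (auto simp: distrib_right mult.assoc intro!: infsum_add infsum_cmult_right summable)
qed

lemma infsum_basis_vec_mult:
  assumes "b \<in> I"
  shows "(\<Sum>\<^sub>\<infinity>x\<in>I. basis_vec b x * c x) = c b"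
proof -
  have "(\<Sum>\<^sub>\<infinity>x\<in>I. basis_vec b x * c x) = (\<Sum>\<^sub>\<infinity>x\<in>{b}. basis_vec b x * c x)"
    by (rule infsum_cong_neutral) (use assms in \<open>auto simp: basis_vec_def\<close>)
  then show ?thesis by (simp add: basis_vec_def)
qed

lemma nonneg_summable_on_levelwise:
  fixes f :: "'a \<Rightarrow> real" and level :: "'a \<Rightarrow> nat"
  assumes nonneg: "\<And>x. x \<in> I \<Longrightarrow> 0 \<le> f x"
    and finite_level: "\<And>l. finite {x \<in> I. level x = l}"
    and level_bound: "\<And>l. sum f {x \<in> I. level x = l} \<le> b l"
    and b: "summable b"
  shows "f summable_on I"
proof (rule nonneg_bdd_above_summable_on[OF nonneg])
  have b_nonneg: "0 \<le> b l" for l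
    using level_bound[of l] sum_nonneg[of "{x \<in> I. level x = l}" f] nonneg by force
  have "sum f F \<le> suminf b" if F: "finite F" "F \<subseteq> I" for F
  proof -
    define M where "M = Suc (Max (insert 0 (level ` F)))"
    have below: "{x \<in> I. level x < M} = (\<Union>l<M. {x \<in> I. level x = l})" by auto
    have "finite {x \<in> I. level x < M}" unfolding below by (simp add: finite_level)
    moreover have "F \<subseteq> {x \<in> I. level x < M}"
      using F by (auto simp: M_def less_Suc_eq_le)
    ultimately have "sum f F \<le> sum f {x \<in> I. level x < M}"
      by (rule sum_mono2) (simp add: nonneg)
    also have "\<dots> = (\<Sum>l<M. sum f {x \<in> I. level x = l})"
      unfolding below by (rule sum.UNION_disjoint) (auto simp: finite_level)
    also have "\<dots> \<le> (\<Sum>l<M. b l)" by (intro sum_mono level_bound)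
    also have "\<dots> \<le> suminf b" by (rule sum_le_suminf[OF b]) (simp_all add: b_nonneg)
    finally show ?thesis .
  qed
  then show "bdd_above (sum f ` {F. F \<subseteq> I \<and> finite F})" by (intro bdd_aboveI) blast
qed

lemma vnorm2_nonneg: "0 \<le> vnorm2 u"
  unfolding vnorm2_def by (simp add: sum_nonneg)

lemma vnorm2_smult: "vnorm2 (k \<cdot>\<^sub>v u) = (cmod k)\<^sup>2 * vnorm2 u"
  unfolding vnorm2_def by (simp add: norm_mult power_mult_distrib sum_distrib_left)

lemma cmod_sesq_squared_le:
  assumes "dim_vec y = dim_row M"
  shows "(cmod (sesq y M u))\<^sup>2 \<le> vnorm2 y * vnorm2 (M *\<^sub>v u)"
  using cmod_sum_mult_squared_le[of "\<lambda>i. cnj (y $ i)" "\<lambda>i. (M *\<^sub>v u) $ i" "{..<dim_vec y}"] assms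
  by (simp add: sesq_def vnorm2_def)

lemma vnorm2_mult_mat_vec_le:
  assumes A: "A \<in> carrier_mat r c" and u: "u \<in> carrier_vec c"
  shows "vnorm2 (A *\<^sub>v u) \<le> (\<Sum>i<r. \<Sum>j<c. (cmod (A $$ (i, j)))\<^sup>2) * vnorm2 u"
proof -
  have "(cmod ((A *\<^sub>v u) $ i))\<^sup>2 \<le> (\<Sum>j<c. (cmod (A $$ (i, j)))\<^sup>2) * vnorm2 u" if "i < r" for i
    using cmod_sum_mult_squared_le[of "\<lambda>j. A $$ (i, j)" "\<lambda>j. u $ j" "{..<c}"] A u that
    by (simp add: vnorm2_def scalar_prod_def lessThan_atLeast0)
  then have "vnorm2 (A *\<^sub>v u) \<le> (\<Sum>i<r. (\<Sum>j<c. (cmod (A $$ (i, j)))\<^sup>2) * vnorm2 u)"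
    using A unfolding vnorm2_def by (auto intro: sum_mono)
  then show ?thesis by (simp add: sum_distrib_right)
qed

lemma col_norm_upper:
  assumes X: "\<forall>k<length X. X ! k \<in> carrier_mat (m*n) (m*n)"
    and u: "u \<in> carrier_vec (m*n)" "vnorm2 u \<le> 1"
  shows "sqrt (\<Sum>k<length X. vnorm2 (X ! k *\<^sub>v u)) \<le> col_norm m n X"
  unfolding col_norm_def
proof (rule cSup_upper)
  define F where "F k = (\<Sum>i<m*n. \<Sum>j<m*n. (cmod (X ! k $$ (i, j)))\<^sup>2)" for k
  have "(\<Sum>k<length X. vnorm2 (X ! k *\<^sub>v w)) \<le> (\<Sum>k<length X. F k)"
    if "w \<in> carrier_vec (m*n)" "vnorm2 w \<le> 1" for w
  proof (rule sum_mono)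
    fix k assume "k \<in> {..<length X}"
    then have "vnorm2 (X ! k *\<^sub>v w) \<le> F k * vnorm2 w"
      unfolding F_def using X that by (intro vnorm2_mult_mat_vec_le) auto
    also have "\<dots> \<le> F k"
      using that by (intro mult_left_le) (auto simp: F_def vnorm2_nonneg sum_nonneg)
    finally show "vnorm2 (X ! k *\<^sub>v w) \<le> F k" .
  qed
  then show "bdd_above {sqrt (\<Sum>k<length X. vnorm2 (X ! k *\<^sub>v w)) | w.
      w \<in> carrier_vec (m*n) \<and> vnorm2 w \<le> 1}"
    by (intro bdd_aboveI[of _ "sqrt (\<Sum>k<length X. F k)"]) auto
qed (use u in blast)

lemma col_norm_nonneg:
  assumes "\<forall>k<length X. X ! k \<in> carrier_mat (m*n) (m*n)"
  shows "0 \<le> col_norm m n X"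
proof -
  have "0 \<le> sqrt (\<Sum>k<length X. vnorm2 (X ! k *\<^sub>v 0\<^sub>v (m*n)))"
    by (simp add: sum_nonneg vnorm2_nonneg)
  also have "\<dots> \<le> col_norm m n X"
    by (rule col_norm_upper[OF assms]) (simp_all add: vnorm2_def)
  finally show ?thesis .
qed

lemma sum_vnorm2_le_col_norm:
  assumes X: "\<forall>k<length X. X ! k \<in> carrier_mat (m*n) (m*n)"
    and u: "u \<in> carrier_vec (m*n)"
  shows "(\<Sum>k<length X. vnorm2 (X ! k *\<^sub>v u)) \<le> (col_norm m n X)\<^sup>2 * vnorm2 u"
proof (cases "vnorm2 u = 0")
  case True
  then show ?thesis
    using vnorm2_mult_mat_vec_le[of "X ! k" "m*n" "m*n" u for k] X u
    by (auto intro!: sum_nonpos)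
next
  case False
  define t where "t = sqrt (vnorm2 u)"
  have t: "t > 0" using False vnorm2_nonneg[of u] by (simp add: t_def)
  define s where "s = complex_of_real (1 / t)"
  have s2: "(cmod s)\<^sup>2 = 1 / t\<^sup>2" using t by (simp add: s_def norm_divide power_divide)
  have t2: "t\<^sup>2 = vnorm2 u" by (simp add: t_def vnorm2_nonneg)
  have "X ! k *\<^sub>v (s \<cdot>\<^sub>v u) = s \<cdot>\<^sub>v (X ! k *\<^sub>v u)" if "k < length X" for k
    using X u that by (intro mult_mat_vec) auto
  then have "(\<Sum>k<length X. vnorm2 (X ! k *\<^sub>v (s \<cdot>\<^sub>v u)))
      = (\<Sum>k<length X. vnorm2 (X ! k *\<^sub>v u)) / t\<^sup>2"
    by (simp add: vnorm2_smult s2 sum_divide_distrib)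
  moreover have "sqrt (\<Sum>k<length X. vnorm2 (X ! k *\<^sub>v (s \<cdot>\<^sub>v u))) \<le> col_norm m n X"
    using t t2 u by (intro col_norm_upper[OF X]) (auto simp: vnorm2_smult s2)
  ultimately have "sqrt ((\<Sum>k<length X. vnorm2 (X ! k *\<^sub>v u)) / t\<^sup>2) \<le> col_norm m n X"
    by simp
  then have "(\<Sum>k<length X. vnorm2 (X ! k *\<^sub>v u)) / t\<^sup>2 \<le> (col_norm m n X)\<^sup>2"
    by (rule sqrt_le_D)
  then show ?thesis using False vnorm2_nonneg[of u] t2 by (simp add: divide_le_eq mult.commute)
qed

lemma sum_lessThan_mult_nat:
  fixes f :: "nat \<Rightarrow> 'a::comm_monoid_add"
  shows "(\<Sum>i<m*n. f i) = (\<Sum>p<m. \<Sum>r<n. f (p*n + r))"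
proof -
  have "(\<Sum>i\<in>{p*n..<p*n+n}. f i) = (\<Sum>r<n. f (p*n + r))" for p
    using sum.atLeastLessThan_shift_0[of f "p*n" "p*n + n"] by (simp add: lessThan_atLeast0 comp_def)
  then show ?thesis using sum.nat_group[of f n m] by (simp add: mult.commute)
qed

lemma kron_unit_carrier [simp]: "kron_unit m n a b \<in> carrier_mat (m*n) (m*n)"
  unfolding kron_unit_def by simp

lemma kron_unit_mult_vec_index:
  assumes u: "u \<in> carrier_vec (m*n)" and b: "b < n" and p: "p < m" and r: "r < n"
  shows "(kron_unit m n a b *\<^sub>v u) $ (p*n + r) = (if r = a then u $ (p*n + b) else 0)"
proof -
  have "Suc p * n \<le> m * n" using p by (intro mult_le_mono1) simp
  then have row: "p*n + r < m*n" and col: "p*n + b < m*n" using r b by simp_all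
  have "(kron_unit m n a b *\<^sub>v u) $ (p*n + r)
      = (\<Sum>j<m*n. (if r = a \<and> j = p*n + b then 1 else 0) * u $ j)"
  proof -
    have "(p*n + r) div n = j div n \<and> (p*n + r) mod n = a \<and> j mod n = b
        \<longleftrightarrow> r = a \<and> j = p*n + b" for j
    proof
      assume "(p*n + r) div n = j div n \<and> (p*n + r) mod n = a \<and> j mod n = b"
      then have "r = a" "j div n = p" "j mod n = b" using r by simp_all
      then show "r = a \<and> j = p*n + b" by (metis div_mult_mod_eq)
    qed (use r b in simp)
    then show ?thesis
      using row u unfolding kron_unit_def by (simp add: scalar_prod_def lessThan_atLeast0)
  qed
  also have "\<dots> = (\<Sum>j<m*n. if j = p*n + b then (if r = a then u $ j else 0) else 0)"
    by (intro sum.cong) auto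
  also have "\<dots> = (if r = a then u $ (p*n + b) else 0)"
    using col by simp
  finally show ?thesis .
qed

lemma vnorm2_kron_unit_mult_vec:
  assumes u: "u \<in> carrier_vec (m*n)" and a: "a < n" and b: "b < n"
  shows "vnorm2 (kron_unit m n a b *\<^sub>v u) = (\<Sum>p<m. (cmod (u $ (p*n + b)))\<^sup>2)"
proof -
  have "dim_vec (kron_unit m n a b *\<^sub>v u) = m*n" by (simp add: kron_unit_def)
  then have "vnorm2 (kron_unit m n a b *\<^sub>v u)
      = (\<Sum>p<m. \<Sum>r<n. (cmod ((kron_unit m n a b *\<^sub>v u) $ (p*n + r)))\<^sup>2)"
    unfolding vnorm2_def by (simp only: sum_lessThan_mult_nat)
  also have "\<dots> = (\<Sum>p<m. \<Sum>r<n. if r = a then (cmod (u $ (p*n + b)))\<^sup>2 else 0)"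
    by (intro sum.cong refl) (simp add: kron_unit_mult_vec_index[OF u b])
  finally show ?thesis using a by simp
qed

lemma sum_vnorm2_kron_unit_mult_vec:
  assumes u: "u \<in> carrier_vec (m*n)"
  shows "(\<Sum>a<n. \<Sum>b<n. vnorm2 (kron_unit m n a b *\<^sub>v u)) = real n * vnorm2 u"
proof -
  have "(\<Sum>a<n. \<Sum>b<n. vnorm2 (kron_unit m n a b *\<^sub>v u)) = (\<Sum>a<n. \<Sum>b<n. \<Sum>p<m. (cmod (u $ (p*n + b)))\<^sup>2)"
    by (intro sum.cong refl) (simp add: vnorm2_kron_unit_mult_vec[OF u])
  also have "\<dots> = real n * (\<Sum>p<m. \<Sum>b<n. (cmod (u $ (p*n + b)))\<^sup>2)"
    by (simp add: sum.swap[of _ "{..<n}" "{..<m}"])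
  also have "\<dots> = real n * vnorm2 u"
    using u by (simp add: vnorm2_def sum_lessThan_mult_nat)
  finally show ?thesis .
qed

lemma word_eval_carrier:
  assumes "\<forall>k<length X. X ! k \<in> carrier_mat (m*n) (m*n)" and "set \<omega> \<subseteq> {..<length X}"
  shows "word_eval m n X \<alpha> \<beta> \<omega> \<in> carrier_mat (m*n) (m*n)"
  using assms by (induction m n X \<alpha> \<beta> \<omega> rule: word_eval.induct) (auto intro!: mult_carrier_mat)

lemma word_eval_snoc:
  assumes X: "\<forall>k<length X. X ! k \<in> carrier_mat (m*n) (m*n)"
    and \<omega>: "set \<omega> \<subseteq> {..<length X}" and w: "w < length X"
    and "length \<alpha> = Suc (length \<omega>)" "length \<beta> = Suc (length \<omega>)"
  shows "word_eval m n X (\<alpha> @ [a]) (\<beta> @ [b]) (\<omega> @ [w])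
    = word_eval m n X \<alpha> \<beta> \<omega> * X ! w * kron_unit m n a b"
  using \<omega> assms(4,5)
proof (induction \<omega> arbitrary: \<alpha> \<beta>)
  case Nil
  then obtain a0 b0 where "\<alpha> = [a0]" "\<beta> = [b0]" by (auto simp: length_Suc_conv)
  then show ?case by simp
next
  case (Cons w0 \<omega>)
  then obtain a0 \<alpha>' b0 \<beta>' where ab: "\<alpha> = a0 # \<alpha>'" "\<beta> = b0 # \<beta>'"
    and len: "length \<alpha>' = Suc (length \<omega>)" "length \<beta>' = Suc (length \<omega>)"
    by (auto simp: length_Suc_conv)
  have \<omega>': "set \<omega> \<subseteq> {..<length X}" and w0: "w0 < length X" using Cons.prems by auto
  let ?K0 = "kron_unit m n a0 b0 * X ! w0" and ?W = "word_eval m n X \<alpha>' \<beta>' \<omega>"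
  have K0: "?K0 \<in> carrier_mat (m*n) (m*n)" using X w0 by (auto intro!: mult_carrier_mat)
  have W: "?W \<in> carrier_mat (m*n) (m*n)" by (rule word_eval_carrier[OF X \<omega>'])
  have Xw: "X ! w \<in> carrier_mat (m*n) (m*n)" using X w by auto
  have "word_eval m n X (\<alpha> @ [a]) (\<beta> @ [b]) ((w0 # \<omega>) @ [w]) = ?K0 * (?W * X ! w * kron_unit m n a b)"
    using Cons.IH[OF \<omega>' len] ab by simp
  also have "\<dots> = ?K0 * ?W * X ! w * kron_unit m n a b"
    using K0 W Xw by (simp add: assoc_mult_mat[of _ "m*n" "m*n" _ "m*n" _ "m*n"])
  finally show ?case using ab by simp
qed

definition fock_level :: "nat \<Rightarrow> nat \<Rightarrow> nat \<Rightarrow> (nat list \<times> nat list \<times> nat list) set" where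
  "fock_level n d l = {t \<in> fock_index n d. length (snd (snd t)) = l}"

definition word_snoc ::
    "(nat \<times> nat \<times> nat) \<times> (nat list \<times> nat list \<times> nat list) \<Rightarrow> nat list \<times> nat list \<times> nat list" where
  "word_snoc = (\<lambda>((a, b, w), (\<alpha>, \<beta>, \<omega>)). (\<alpha> @ [a], \<beta> @ [b], \<omega> @ [w]))"

definition basis_eval :: "nat \<Rightarrow> nat \<Rightarrow> complex mat list \<Rightarrow> nat list \<times> nat list \<times> nat list \<Rightarrow> complex mat" where
  "basis_eval m n X = (\<lambda>(\<alpha>, \<beta>, \<omega>). word_eval m n X \<alpha> \<beta> \<omega>)"

lemma inj_word_snoc: "inj word_snoc"
  unfolding inj_def word_snoc_def by auto

lemma fock_level_0: "fock_level n d 0 = (\<lambda>(a, b). ([a], [b], [])) ` ({..<n} \<times> {..<n})"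
  unfolding fock_level_def fock_index_def by (auto simp: length_Suc_conv)

lemma fock_level_Suc:
  "fock_level n d (Suc l) = word_snoc ` (({..<n} \<times> {..<n} \<times> {..<d}) \<times> fock_level n d l)"
proof
  show "word_snoc ` (({..<n} \<times> {..<n} \<times> {..<d}) \<times> fock_level n d l) \<subseteq> fock_level n d (Suc l)"
    unfolding fock_level_def fock_index_def word_snoc_def by auto
next
  show "fock_level n d (Suc l) \<subseteq> word_snoc ` (({..<n} \<times> {..<n} \<times> {..<d}) \<times> fock_level n d l)"
  proof
    fix t assume t: "t \<in> fock_level n d (Suc l)"
    then obtain \<alpha> \<beta> \<omega> where t_eq: "t = (\<alpha>, \<beta>, \<omega>)" and
      len: "length \<alpha> = Suc (Suc l)" "length \<beta> = Suc (Suc l)" "length \<omega> = Suc l"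
      unfolding fock_level_def fock_index_def by auto
    obtain \<alpha>' a \<beta>' b \<omega>' w where "\<alpha> = \<alpha>' @ [a]" "\<beta> = \<beta>' @ [b]" "\<omega> = \<omega>' @ [w]"
      using len by (metis length_Suc_conv_rev)
    with t t_eq show "t \<in> word_snoc ` (({..<n} \<times> {..<n} \<times> {..<d}) \<times> fock_level n d l)"
      unfolding fock_level_def fock_index_def word_snoc_def
      by (auto intro!: image_eqI[where x = "((a, b, w), (\<alpha>', \<beta>', \<omega>'))"])
  qed
qed

lemma finite_fock_level: "finite (fock_level n d l)"
  by (induction l) (simp_all add: fock_level_0 fock_level_Suc)

lemma basis_eval_carrier:
  assumes "\<forall>k<length X. X ! k \<in> carrier_mat (m*n) (m*n)" and "t \<in> fock_index n (length X)"
  shows "basis_eval m n X t \<in> carrier_mat (m*n) (m*n)"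
  using assms word_eval_carrier by (auto simp: basis_eval_def fock_index_def)

lemma basis_eval_word_snoc_mult_vec:
  assumes X: "\<forall>k<length X. X ! k \<in> carrier_mat (m*n) (m*n)"
    and t: "t \<in> fock_level n (length X) l" and w: "w < length X" and u: "u \<in> carrier_vec (m*n)"
  shows "basis_eval m n X (word_snoc ((a, b, w), t)) *\<^sub>v u
    = basis_eval m n X t *\<^sub>v (X ! w *\<^sub>v (kron_unit m n a b *\<^sub>v u))"
proof -
  have W: "basis_eval m n X t \<in> carrier_mat (m*n) (m*n)"
    using t basis_eval_carrier[OF X] by (simp add: fock_level_def)
  have Xw: "X ! w \<in> carrier_mat (m*n) (m*n)" using X w by simp
  have Ku: "kron_unit m n a b *\<^sub>v u \<in> carrier_vec (m*n)"
    using u by (intro mult_mat_vec_carrier) auto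
  have "basis_eval m n X (word_snoc ((a, b, w), t)) = basis_eval m n X t * X ! w * kron_unit m n a b"
    using t word_eval_snoc[OF X _ w]
    by (auto simp: basis_eval_def word_snoc_def fock_level_def fock_index_def)
  also have "\<dots> *\<^sub>v u = basis_eval m n X t * X ! w *\<^sub>v (kron_unit m n a b *\<^sub>v u)"
    by (rule assoc_mult_mat_vec[OF mult_carrier_mat[OF W Xw] kron_unit_carrier u])
  also have "\<dots> = basis_eval m n X t *\<^sub>v (X ! w *\<^sub>v (kron_unit m n a b *\<^sub>v u))"
    by (rule assoc_mult_mat_vec[OF W Xw Ku])
  finally show ?thesis .
qed

lemma sum_vnorm2_basis_eval_le:
  assumes X: "\<forall>k<length X. X ! k \<in> carrier_mat (m*n) (m*n)"
    and u: "u \<in> carrier_vec (m*n)"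
  shows "(\<Sum>t\<in>fock_level n (length X) l. vnorm2 (basis_eval m n X t *\<^sub>v u))
    \<le> real n * (real n * (col_norm m n X)\<^sup>2) ^ l * vnorm2 u"
  using u
proof (induction l arbitrary: u)
  case 0
  have "inj_on (\<lambda>(a, b). ([a], [b], [] :: nat list)) ({..<n} \<times> {..<n})"
    by (auto simp: inj_on_def)
  then show ?case
    by (simp add: fock_level_0 sum.reindex sum.cartesian_product' basis_eval_def
        sum_vnorm2_kron_unit_mult_vec[OF "0.prems"])
next
  case (Suc l)
  define d where "d = length X"
  define c where "c = col_norm m n X"
  define C where "C = real n * (real n * c\<^sup>2) ^ l"
  have C: "0 \<le> C" by (simp add: C_def)
  let ?Ku = "\<lambda>a b. kron_unit m n a b *\<^sub>v u"
  have Ku: "?Ku a b \<in> carrier_vec (m*n)" for a b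
    using Suc.prems by (intro mult_mat_vec_carrier) auto
  have XKu: "X ! w *\<^sub>v ?Ku a b \<in> carrier_vec (m*n)" if "w < d" for a b w
    using X Ku that by (auto simp: d_def intro: mult_mat_vec_carrier)
  have "(\<Sum>t\<in>fock_level n d (Suc l). vnorm2 (basis_eval m n X t *\<^sub>v u))
      = (\<Sum>a<n. \<Sum>b<n. \<Sum>w<d. \<Sum>t\<in>fock_level n d l. vnorm2 (basis_eval m n X t *\<^sub>v (X ! w *\<^sub>v ?Ku a b)))"
    unfolding fock_level_Suc
    by (simp add: sum.reindex[OF inj_on_subset[OF inj_word_snoc]] sum.cartesian_product'
        basis_eval_word_snoc_mult_vec[OF X _ _ Suc.prems] d_def)
  also have "\<dots> \<le> (\<Sum>a<n. \<Sum>b<n. \<Sum>w<d. C * vnorm2 (X ! w *\<^sub>v ?Ku a b))"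
    using Suc.IH XKu by (intro sum_mono) (simp add: C_def c_def d_def)
  also have "\<dots> \<le> (\<Sum>a<n. \<Sum>b<n. C * (c\<^sup>2 * vnorm2 (?Ku a b)))"
    using sum_vnorm2_le_col_norm[OF X Ku] C
    by (intro sum_mono) (simp add: sum_distrib_left[symmetric] mult_left_mono c_def d_def)
  also have "\<dots> = C * c\<^sup>2 * (real n * vnorm2 u)"
    by (simp add: sum_distrib_left[symmetric] sum_vnorm2_kron_unit_mult_vec[OF Suc.prems] mult.assoc)
  also have "\<dots> = real n * (real n * c\<^sup>2) ^ Suc l * vnorm2 u"
    by (simp add: C_def)
  finally show ?case by (simp add: c_def d_def)
qed

lemma sum_cmod_sesq_basis_eval_le:
  assumes X: "\<forall>k<length X. X ! k \<in> carrier_mat (m*n) (m*n)"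
    and y: "y \<in> carrier_vec (m*n)" and v: "v \<in> carrier_vec (m*n)"
  shows "(\<Sum>t\<in>fock_level n (length X) l. (cmod (sesq y (basis_eval m n X t) v))\<^sup>2)
    \<le> vnorm2 y * (real n * (real n * (col_norm m n X)\<^sup>2) ^ l * vnorm2 v)"
proof -
  have "(cmod (sesq y (basis_eval m n X t) v))\<^sup>2 \<le> vnorm2 y * vnorm2 (basis_eval m n X t *\<^sub>v v)"
    if "t \<in> fock_level n (length X) l" for t
  proof (rule cmod_sesq_squared_le)
    have "basis_eval m n X t \<in> carrier_mat (m*n) (m*n)"
      using that basis_eval_carrier[OF X] by (simp add: fock_level_def)
    then show "dim_vec y = dim_row (basis_eval m n X t)" using y by simp
  qed
  then have "(\<Sum>t\<in>fock_level n (length X) l. (cmod (sesq y (basis_eval m n X t) v))\<^sup>2)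
      \<le> vnorm2 y * (\<Sum>t\<in>fock_level n (length X) l. vnorm2 (basis_eval m n X t *\<^sub>v v))"
    by (simp add: sum_distrib_left sum_mono)
  also have "\<dots> \<le> vnorm2 y * (real n * (real n * (col_norm m n X)\<^sup>2) ^ l * vnorm2 v)"
    by (intro mult_left_mono sum_vnorm2_basis_eval_le[OF X v] vnorm2_nonneg)
  finally show ?thesis .
qed

theorem mainTheorem8:
  fixes m n d :: nat and X :: "complex mat list" and y v :: "complex vec"
  assumes "length X = d"
    and "\<forall>k<d. X ! k \<in> carrier_mat (m*n) (m*n)"
    and "y \<in> carrier_vec (m*n)" and "v \<in> carrier_vec (m*n)"
    and "col_norm m n X < 1 / sqrt (real n)"
  shows "\<exists>L. bounded_linear_functional_on (fock_index n d) L \<and>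
           (\<forall>b\<in>fock_index n d. L (basis_vec b) =
              (case b of (\<alpha>, \<beta>, \<omega>) \<Rightarrow> sesq y (word_eval m n X \<alpha> \<beta> \<omega>) v))"
proof -
  have X: "\<forall>k<length X. X ! k \<in> carrier_mat (m*n) (m*n)" using assms(1,2) by simp
  define \<rho> where "\<rho> = real n * (col_norm m n X)\<^sup>2"
  have "\<rho> < 1"
  proof (cases "n = 0")
    case False
    then have "(col_norm m n X * sqrt (real n))\<^sup>2 < 1\<^sup>2"
      using assms(5) col_norm_nonneg[OF X] by (intro power_strict_mono) (simp_all add: field_simps)
    then show ?thesis by (simp add: \<rho>_def power_mult_distrib mult.commute)
  qed (simp add: \<rho>_def)
  then have geometric: "summable (\<lambda>l. vnorm2 y * (real n * \<rho> ^ l * vnorm2 v))"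
    by (intro summable_mult summable_mult2 summable_geometric) (simp add: \<rho>_def)
  define c where "c t = sesq y (basis_eval m n X t) v" for t
  have "(\<lambda>t. (cmod (c t))\<^sup>2) summable_on fock_index n d"
    using finite_fock_level sum_cmod_sesq_basis_eval_le[OF X assms(3,4)] geometric
    by (intro nonneg_summable_on_levelwise[where level = "\<lambda>t. length (snd (snd t))"
          and b = "\<lambda>l. vnorm2 y * (real n * \<rho> ^ l * vnorm2 v)"])
      (auto simp: fock_level_def c_def \<rho>_def assms(1))
  then have "bounded_linear_functional_on (fock_index n d) (\<lambda>f. \<Sum>\<^sub>\<infinity>t\<in>fock_index n d. f t * c t)"
    by (rule bounded_linear_functional_on_ell2_pairing)
  then show ?thesis
    by (auto simp: infsum_basis_vec_mult c_def basis_eval_def)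
qed

end
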